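(* Let $d\ge1$, let $H$ be a hypergraph of $d$-intervals and let $w$ be a weight system on $H$. Then $\tau_w(H)\le d\,\tau^*_w(H)$.
   Context: A $d$-interval is a union of at most $d$ pairwise disjoint closed intervals of the real line $\mathbb{R}$. A hypergraph of $d$-intervals is a finite family $H$ of $d$-intervals, regarded as a hypergraph whose vertices are the points of $\mathbb{R}$ and whose edges are the members of $H$. A weight system on $H$ is a function $w:H\to\mathbb{N}$. A $w$-cover is a finitely supported function $g:\mathbb{R}\to\mathbb{N}$ with $\sum_{v\in h}g(v)\ge w(h)$ for every $h\in H$; $\tau_w(H)$ is the minimum of $\sum_v g(v)$ over all $w$-covers. A fractional $w$-cover is defined in the same way but with $g:\mathbb{R}\to\mathbb{R}_{\ge0}$ (finitely supported); $\tau^*_w(H)$ is the infimum of $\sum_v g(v)$ over all fractional $w$-covers. *)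

theory Defs
  imports "HOL-Analysis.Analysis"
begin

definition d_interval :: "nat \<Rightarrow> real set \<Rightarrow> bool" where
  "d_interval d S \<longleftrightarrow> (\<exists>I. finite I \<and> card I \<le> d \<and>
      (\<forall>J\<in>I. \<exists>a b. a \<le> b \<and> J = {a..b}) \<and> pairwise disjnt I \<and> S = \<Union>I)"

definition w_cover :: "real set set \<Rightarrow> (real set \<Rightarrow> nat) \<Rightarrow> (real \<Rightarrow> nat) \<Rightarrow> bool" where
  "w_cover H w g \<longleftrightarrow> finite {v. g v \<noteq> 0} \<and>
     (\<forall>h\<in>H. (\<Sum>v\<in>h \<inter> {v. g v \<noteq> 0}. g v) \<ge> w h)"

definition frac_w_cover :: "real set set \<Rightarrow> (real set \<Rightarrow> nat) \<Rightarrow> (real \<Rightarrow> real) \<Rightarrow> bool" where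
  "frac_w_cover H w g \<longleftrightarrow> (\<forall>v. g v \<ge> 0) \<and> finite {v. g v \<noteq> 0} \<and>
     (\<forall>h\<in>H. (\<Sum>v\<in>h \<inter> {v. g v \<noteq> 0}. g v) \<ge> real (w h))"

text \<open>Cover numbers as infima in the extended reals (= \<infinity> if no cover exists).\<close>
definition tau_w :: "real set set \<Rightarrow> (real set \<Rightarrow> nat) \<Rightarrow> ereal" where
  "tau_w H w = (INF g\<in>{g. w_cover H w g}. ereal (real (\<Sum>v\<in>{v. g v \<noteq> 0}. g v)))"

definition tau_star_w :: "real set set \<Rightarrow> (real set \<Rightarrow> nat) \<Rightarrow> ereal" where
  "tau_star_w H w = (INF g\<in>{g. frac_w_cover H w g}. ereal (\<Sum>v\<in>{v. g v \<noteq> 0}. g v))"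

end

theory Submission
  imports Defs
begin

text \<open>Multiply a fractional cover by \<open>d\<close> and view it as a finite mass distribution
on the line with cumulative distribution function \<open>F\<close>. Rounding places at each atom \<open>v\<close> as many
points as there are integers in the jump \<open>(F(v\<^sup>-), F(v)]\<close>. By telescoping, every closed interval
then receives at least the floor of its mass, and the total is the floor of the total mass, at
most \<open>d \<tau>\<^sup>*\<close>. An edge is a union of \<open>k \<le> d\<close> disjoint intervals of total scaled mass at least
\<open>d w\<close>; each floor loses less than one, so the edge receives more than \<open>d w - d \<ge> w - 1\<close> points.\<close>

lemma sum_Int_atMost_split:
  fixes a b :: "'a::linorder"
  assumes "finite S" "a \<le> b"
  shows "sum c (S \<inter> {..b}) = sum c (S \<inter> {..<a}) + sum c (S \<inter> {a..b})"
proof -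
  have "S \<inter> {..b} = (S \<inter> {..<a}) \<union> (S \<inter> {a..b})"
    using ivl_disj_un_one(4)[OF assms(2)] by blast
  moreover have "(S \<inter> {..<a}) \<inter> (S \<inter> {a..b}) = {}" by auto
  ultimately show ?thesis using assms(1) by (simp add: sum.union_disjoint)
qed

lemma prefix_sum_telescope_atMost:
  fixes S :: "'a::linorder set" and c :: "'a \<Rightarrow> 'b::comm_monoid_add"
    and \<phi> :: "'b \<Rightarrow> 'c::ab_group_add"
  assumes "finite S"
  shows "(\<Sum>v\<in>S \<inter> {..b}. \<phi> (sum c (S \<inter> {..v})) - \<phi> (sum c (S \<inter> {..<v})))
         = \<phi> (sum c (S \<inter> {..b})) - \<phi> 0"
  using assms
proof (induction S arbitrary: b rule: finite_linorder_max_induct)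
  case empty
  then show ?case by simp
next
  case (insert m A)
  have same_below: "insert m A \<inter> X = A \<inter> X" if "X \<subseteq> {..<m}" for X
    using that by auto
  have terms_agree: "sum c (insert m A \<inter> {..v}) = sum c (A \<inter> {..v})"
    "sum c (insert m A \<inter> {..<v}) = sum c (A \<inter> {..<v})" if "v \<in> A" for v
    using same_below[of "{..v}"] same_below[of "{..<v}"] insert.hyps(2) that by auto
  show ?case
  proof (cases "b < m")
    case True
    then show ?thesis
      using insert.IH[of b] same_below[of "{..b}"] terms_agree
      by (auto intro!: sum.cong)
  next
    case False
    then have "insert m A \<inter> {..b} = insert m A" and "A \<inter> {..m} = A"
      and "insert m A \<inter> {..<m} = A"
      using insert.hyps(2) by auto
    then show ?thesis
      using insert.IH[of m] insert.hyps terms_agree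
      by (simp add: sum.insert_if cong: sum.cong)
  qed
qed

lemma prefix_sum_telescope_lessThan:
  fixes S :: "'a::linorder set" and c :: "'a \<Rightarrow> 'b::comm_monoid_add"
    and \<phi> :: "'b \<Rightarrow> 'c::ab_group_add"
  assumes "finite S"
  shows "(\<Sum>v\<in>S \<inter> {..<a}. \<phi> (sum c (S \<inter> {..v})) - \<phi> (sum c (S \<inter> {..<v})))
         = \<phi> (sum c (S \<inter> {..<a})) - \<phi> 0"
proof (cases "S \<inter> {..<a} = {}")
  case False
  define m where "m = Max (S \<inter> {..<a})"
  have "m \<in> S \<inter> {..<a}" and "\<forall>v\<in>S \<inter> {..<a}. v \<le> m"
    using assms False Max_in[of "S \<inter> {..<a}"] by (simp_all add: m_def)
  then have "S \<inter> {..<a} = S \<inter> {..m}" by fastforce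
  then show ?thesis using prefix_sum_telescope_atMost[OF assms, of \<phi> c m] by simp
qed simp

lemma prefix_sum_telescope:
  fixes S :: "'a::linorder set" and c :: "'a \<Rightarrow> 'b::comm_monoid_add"
    and \<phi> :: "'b \<Rightarrow> 'c::ab_group_add"
  assumes "finite S" "a \<le> b"
  shows "(\<Sum>v\<in>S \<inter> {a..b}. \<phi> (sum c (S \<inter> {..v})) - \<phi> (sum c (S \<inter> {..<v})))
         = \<phi> (sum c (S \<inter> {..b})) - \<phi> (sum c (S \<inter> {..<a}))"
  using sum_Int_atMost_split[OF assms,
      of "\<lambda>v. \<phi> (sum c (S \<inter> {..v})) - \<phi> (sum c (S \<inter> {..<v}))"]
    prefix_sum_telescope_atMost[OF assms(1), of \<phi> c b]
    prefix_sum_telescope_lessThan[OF assms(1), of \<phi> c a]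
  by (simp add: eq_diff_eq)

lemma prefix_sum_telescope_total:
  fixes S :: "'a::linorder set" and c :: "'a \<Rightarrow> 'b::comm_monoid_add"
    and \<phi> :: "'b \<Rightarrow> 'c::ab_group_add"
  assumes "finite S"
  shows "(\<Sum>v\<in>S. \<phi> (sum c (S \<inter> {..v})) - \<phi> (sum c (S \<inter> {..<v}))) = \<phi> (sum c S) - \<phi> 0"
proof (cases "S = {}")
  case False
  then have "S \<inter> {..Max S} = S" using assms by auto
  then show ?thesis using prefix_sum_telescope_atMost[OF assms, of \<phi> c "Max S"] by simp
qed simp

lemma sum_Int_support_eq:
  fixes g :: "'a \<Rightarrow> 'b::comm_monoid_add"
  assumes "finite S" "{v. g v \<noteq> 0} \<subseteq> S"
  shows "sum g (A \<inter> {v. g v \<noteq> 0}) = sum g (A \<inter> S)"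
  by (rule sum.mono_neutral_left) (use assms in auto)

lemma sum_Union_Int_disjoint:
  assumes "finite I" "pairwise disjnt I" "finite S"
  shows "sum g (\<Union>I \<inter> S) = (\<Sum>J\<in>I. sum g (J \<inter> S))"
proof -
  have "\<Union>I \<inter> S = (\<Union>J\<in>I. J \<inter> S)" by blast
  then show ?thesis
    using assms sum.UNION_disjoint[of I "\<lambda>J. J \<inter> S" g]
    by (auto simp: pairwise_def disjnt_def)
qed

lemma sum_floor_ge_if_sum_ge_mult:
  fixes x :: "'i \<Rightarrow> real"
  assumes "finite I" "card I \<le> d" "1 \<le> d" "\<forall>i\<in>I. 0 \<le> x i" "real d * real W \<le> sum x I"
  shows "int W \<le> (\<Sum>i\<in>I. \<lfloor>x i\<rfloor>)"
proof (cases "W = 0")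
  case True
  then show ?thesis using assms(4) by (simp add: sum_nonneg)
next
  case False
  then have "I \<noteq> {}" using assms(3,5) by (auto simp: mult_le_0_iff)
  then have "sum x I - card I < (\<Sum>i\<in>I. real_of_int \<lfloor>x i\<rfloor>)"
    using sum_strict_mono[OF assms(1), of "\<lambda>i. x i - 1" "\<lambda>i. real_of_int \<lfloor>x i\<rfloor>"]
    by (simp add: sum_subtractf)
  then have "real_of_int (int d * int W - int d) < real_of_int (\<Sum>i\<in>I. \<lfloor>x i\<rfloor>)"
    using assms(2,5) by simp
  then have "int d * int W - int d < (\<Sum>i\<in>I. \<lfloor>x i\<rfloor>)"
    by (simp only: of_int_less_iff)
  moreover have "0 \<le> (int d - 1) * (int W - 1)" using assms(3) False by simp
  ultimately show ?thesis by (simp add: algebra_simps)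
qed

definition staircase_round :: "('a::linorder \<Rightarrow> real) \<Rightarrow> 'a \<Rightarrow> nat" where
  "staircase_round c v =
     nat (\<lfloor>sum c ({u. c u \<noteq> 0} \<inter> {..v})\<rfloor> - \<lfloor>sum c ({u. c u \<noteq> 0} \<inter> {..<v})\<rfloor>)"

lemma staircase_round_support: "{v. staircase_round c v \<noteq> 0} \<subseteq> {v. c v \<noteq> 0}"
proof -
  have "staircase_round c v = 0" if "c v = 0" for v
  proof -
    have "{u. c u \<noteq> 0} \<inter> {..v} = {u. c u \<noteq> 0} \<inter> {..<v}"
      using that by (auto simp: order_le_less)
    then show ?thesis unfolding staircase_round_def by simp
  qed
  then show ?thesis by auto
qed

lemma of_nat_staircase_round:
  assumes "\<forall>u. 0 \<le> c u" "finite {u. c u \<noteq> 0}"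
  shows "int (staircase_round c v) =
           \<lfloor>sum c ({u. c u \<noteq> 0} \<inter> {..v})\<rfloor> - \<lfloor>sum c ({u. c u \<noteq> 0} \<inter> {..<v})\<rfloor>"
proof -
  have "sum c ({u. c u \<noteq> 0} \<inter> {..<v}) \<le> sum c ({u. c u \<noteq> 0} \<inter> {..v})"
    using assms by (intro sum_mono2) auto
  then show ?thesis unfolding staircase_round_def by (simp add: floor_mono)
qed

lemma floor_sum_le_sum_staircase_round:
  fixes c :: "'a::linorder \<Rightarrow> real"
  assumes "\<forall>u. 0 \<le> c u" "finite {u. c u \<noteq> 0}" "a \<le> b"
  shows "\<lfloor>sum c ({a..b} \<inter> {u. c u \<noteq> 0})\<rfloor>
           \<le> int (sum (staircase_round c) ({a..b} \<inter> {u. c u \<noteq> 0}))"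
proof -
  define S where "S = {u. c u \<noteq> 0}"
  have round_eq:
    "int (staircase_round c v) = \<lfloor>sum c (S \<inter> {..v})\<rfloor> - \<lfloor>sum c (S \<inter> {..<v})\<rfloor>" for v
    using of_nat_staircase_round[OF assms(1,2)] unfolding S_def .
  have "int (sum (staircase_round c) ({a..b} \<inter> S))
          = (\<Sum>v\<in>S \<inter> {a..b}. \<lfloor>sum c (S \<inter> {..v})\<rfloor> - \<lfloor>sum c (S \<inter> {..<v})\<rfloor>)"
    by (simp only: of_nat_sum round_eq Int_commute)
  also have "\<dots> = \<lfloor>sum c (S \<inter> {..b})\<rfloor> - \<lfloor>sum c (S \<inter> {..<a})\<rfloor>"
    using prefix_sum_telescope[of S a b floor c] assms(2,3) unfolding S_def by simp
  also have "\<dots> \<ge> \<lfloor>sum c (S \<inter> {..b}) - sum c (S \<inter> {..<a})\<rfloor>"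
    using le_floor_add[of "sum c (S \<inter> {..b}) - sum c (S \<inter> {..<a})" "sum c (S \<inter> {..<a})"]
    by simp
  also have "sum c (S \<inter> {..b}) - sum c (S \<inter> {..<a}) = sum c ({a..b} \<inter> S)"
    using sum_Int_atMost_split[of S a b c] assms(2,3) unfolding S_def by (simp add: Int_commute)
  finally show ?thesis unfolding S_def .
qed

lemma sum_staircase_round:
  fixes c :: "'a::linorder \<Rightarrow> real"
  assumes "\<forall>u. 0 \<le> c u" "finite {u. c u \<noteq> 0}"
  shows "int (sum (staircase_round c) {u. c u \<noteq> 0}) = \<lfloor>sum c {u. c u \<noteq> 0}\<rfloor>"
  using prefix_sum_telescope_total[OF assms(2), of floor c] of_nat_staircase_round[OF assms]
  by simp

lemma staircase_round_covers_d_interval: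
  fixes c :: "real \<Rightarrow> real"
  assumes "\<forall>u. 0 \<le> c u" "finite {u. c u \<noteq> 0}" "d_interval d h" "1 \<le> d"
    and "real d * real W \<le> sum c (h \<inter> {u. c u \<noteq> 0})"
  shows "W \<le> sum (staircase_round c) (h \<inter> {u. c u \<noteq> 0})"
proof -
  define S where "S = {u. c u \<noteq> 0}"
  obtain I where I: "finite I" "card I \<le> d" "\<forall>J\<in>I. \<exists>a b. a \<le> b \<and> J = {a..b}"
    "pairwise disjnt I" "h = \<Union>I"
    using assms(3) unfolding d_interval_def by blast
  have "int W \<le> (\<Sum>J\<in>I. \<lfloor>sum c (J \<inter> S)\<rfloor>)"
  proof (rule sum_floor_ge_if_sum_ge_mult[OF I(1,2) assms(4)])
    show "\<forall>J\<in>I. 0 \<le> sum c (J \<inter> S)" using assms(1) by (simp add: sum_nonneg)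
    show "real d * real W \<le> (\<Sum>J\<in>I. sum c (J \<inter> S))"
      using assms(5) sum_Union_Int_disjoint[OF I(1,4) assms(2), of c] unfolding I(5) S_def
      by linarith
  qed
  also have "\<dots> \<le> (\<Sum>J\<in>I. int (sum (staircase_round c) (J \<inter> S)))"
    using floor_sum_le_sum_staircase_round[OF assms(1,2)] I(3)
    by (intro sum_mono) (auto simp: S_def)
  also have "\<dots> = int (sum (staircase_round c) (h \<inter> S))"
    using sum_Union_Int_disjoint[OF I(1,4) assms(2), of "staircase_round c"]
    unfolding I(5) S_def by (simp add: of_nat_sum)
  finally show ?thesis unfolding S_def by (simp only: of_nat_le_iff)
qed

lemma frac_w_cover_staircase_round:
  assumes "frac_w_cover H w f" "1 \<le> d" "\<forall>h\<in>H. d_interval d h"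
  defines "g \<equiv> staircase_round (\<lambda>v. real d * f v)"
  shows "w_cover H w g"
    and "real (\<Sum>v\<in>{v. g v \<noteq> 0}. g v) \<le> real d * (\<Sum>v\<in>{v. f v \<noteq> 0}. f v)"
proof -
  define c where "c = (\<lambda>v. real d * f v)"
  have f_nonneg: "\<forall>u. 0 \<le> f u" and fin_f: "finite {v. f v \<noteq> 0}"
    and f_covers: "\<forall>h\<in>H. real (w h) \<le> sum f (h \<inter> {v. f v \<noteq> 0})"
    using assms(1) unfolding frac_w_cover_def by auto
  have c_nonneg: "\<forall>u. 0 \<le> c u" using f_nonneg by (simp add: c_def)
  have supp_c: "{u. c u \<noteq> 0} = {v. f v \<noteq> 0}" using assms(2) by (simp add: c_def)
  have fin: "finite {u. c u \<noteq> 0}" using fin_f supp_c by simp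
  have g_c: "g = staircase_round c" by (simp add: g_def c_def)
  have sum_g: "sum g (A \<inter> {v. g v \<noteq> 0}) = sum g (A \<inter> {u. c u \<noteq> 0})" for A
    unfolding g_c by (rule sum_Int_support_eq[OF fin staircase_round_support])
  have "w h \<le> sum g (h \<inter> {v. g v \<noteq> 0})" if "h \<in> H" for h
  proof -
    have "real d * real (w h) \<le> real d * sum f (h \<inter> {v. f v \<noteq> 0})"
      using f_covers that by (simp add: mult_left_mono)
    also have "\<dots> = sum c (h \<inter> {u. c u \<noteq> 0})"
      unfolding supp_c by (simp add: c_def sum_distrib_left)
    finally have "w h \<le> sum g (h \<inter> {u. c u \<noteq> 0})"
      unfolding g_c using staircase_round_covers_d_interval[OF c_nonneg fin] assms(2,3) that
      by blast
    then show ?thesis by (simp only: sum_g)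
  qed
  moreover have "finite {v. g v \<noteq> 0}"
    unfolding g_c by (rule finite_subset[OF staircase_round_support fin])
  ultimately show "w_cover H w g" by (simp add: w_cover_def)
  have "real (sum g {v. g v \<noteq> 0}) = real_of_int \<lfloor>sum c {u. c u \<noteq> 0}\<rfloor>"
    using sum_g[of UNIV] sum_staircase_round[OF c_nonneg fin] unfolding g_c
    by (metis Int_UNIV_left of_int_of_nat_eq)
  also have "\<dots> \<le> sum c {u. c u \<noteq> 0}" by (rule of_int_floor_le)
  also have "\<dots> = real d * (\<Sum>v\<in>{v. f v \<noteq> 0}. f v)"
    unfolding supp_c by (simp add: c_def sum_distrib_left)
  finally show "real (\<Sum>v\<in>{v. g v \<noteq> 0}. g v) \<le> real d * (\<Sum>v\<in>{v. f v \<noteq> 0}. f v)" .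
qed

lemma INF_le_cmult_INF:
  fixes s :: "'a \<Rightarrow> ereal" and t :: "'b \<Rightarrow> ereal"
  assumes "0 < c" "\<And>x. x \<in> A \<Longrightarrow> \<exists>y\<in>B. t y \<le> ereal c * s x"
  shows "(INF y\<in>B. t y) \<le> ereal c * (INF x\<in>A. s x)"
proof -
  have "ereal c * (INF x\<in>A. s x) = (INF x\<in>A. ereal c * s x)"
    using ereal_Inf_cmult[OF assms(1), of "\<lambda>z. z \<in> s ` A"]
    by (simp add: setcompr_eq_image image_image)
  also have "(INF y\<in>B. t y) \<le> \<dots>"
    using assms(2) by (auto intro!: INF_greatest intro: INF_lower2)
  finally show ?thesis .
qed

theorem theorem1p9:
  fixes d :: nat and H :: "real set set" and w :: "real set \<Rightarrow> nat"
  assumes "d \<ge> 1" and "finite H" and "\<forall>h\<in>H. d_interval d h"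
  shows "tau_w H w \<le> ereal (real d) * tau_star_w H w"
  unfolding tau_w_def tau_star_w_def
proof (rule INF_le_cmult_INF)
  show "0 < real d" using assms(1) by simp
  fix f assume "f \<in> {f. frac_w_cover H w f}"
  then show "\<exists>g\<in>{g. w_cover H w g}. ereal (real (\<Sum>v\<in>{v. g v \<noteq> 0}. g v))
               \<le> ereal (real d) * ereal (\<Sum>v\<in>{v. f v \<noteq> 0}. f v)"
    using frac_w_cover_staircase_round[OF _ assms(1,3)] by fastforce
qed

end
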